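(* Let $\mathcal A$ be a Krull–Schmidt abelian category with enough projectives and enough injectives, and let $(\mathcal X,\mathcal Z,\mathcal Y)$ be a complete hereditary cotorsion triple in $\mathcal A$. Let $\mathcal E=(\mathcal A,F_{\mathcal X})$ be the exact category whose conflations are the short exact sequences in $F_{\mathcal X}$. Then $\mathcal E$ has enough projectives and enough injectives; moreover the projective objects of $\mathcal E$ are exactly the objects of $\mathcal X$ and the injective objects of $\mathcal E$ are exactly the objects of $\mathcal Y$.
   Context: All subcategories are full, additive and closed under isomorphisms. A pair $(\mathcal X,\mathcal Y)$ of subcategories of $\mathcal A$ is a cotorsion pair if $\mathcal X=\{A:\mathrm{Ext}^1_{\mathcal A}(A,Y)=0\ \forall Y\in\mathcal Y\}$ and $\mathcal Y=\{B:\mathrm{Ext}^1_{\mathcal A}(X,B)=0\ \forall X\in\mathcal X\}$; it is complete if every $A\in\mathcal A$ admits short exact sequences $0\to Y\to X\to A\to0$ and $0\to A\to Y'\to X'\to0$ with $X,X'\in\mathcal X$, $Y,Y'\in\mathcal Y$; it is hereditary if $\mathcal X$ is resolving (contains the projectives, closed under extensions and under kernels of epimorphisms between its objects), equivalently $\mathcal Y$ is coresolving. A triple $(\mathcal X,\mathcal Z,\mathcal Y)$ is a cotorsion triple if $(\mathcal X,\mathcal Z)$ and $(\mathcal Z,\mathcal Y)$ are both cotorsion pairs; it is complete (hereditary) if both pairs are. $F_{\mathcal X}$ is the class of short exact sequences $0\to A\to B\to C\to0$ in $\mathcal A$ such that $\mathrm{Hom}_{\mathcal A}(X,B)\to\mathrm{Hom}_{\mathcal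 A}(X,C)$ is surjective for every $X\in\mathcal X$; $(\mathcal A,F_{\mathcal X})$ is an exact category. Projective (injective) objects of an exact category are those $P$ with $\mathrm{Hom}(P,-)$ (resp. $\mathrm{Hom}(-,P)$) exact on conflations; enough projectives means every object is the end term of a conflation with projective middle term, and dually for injectives. *)

theory Defs
  imports Main
begin

text \<open>A (small, set-based) preadditive category: objects, arrows with domain and
codomain, composition (comp g f = g after f), identities, and on every hom-set an
abelian group structure (zero morphism, addition, negation).\<close>

record ('o, 'm) acat =
  Obj  :: "'o set"
  Arr  :: "'m set"
  dom  :: "'m \<Rightarrow> 'o"
  cod  :: "'m \<Rightarrow> 'o"
  comp :: "'m \<Rightarrow> 'm \<Rightarrow> 'm"
  idm  :: "'o \<Rightarrow> 'm"
  zer  :: "'o \<Rightarrow> 'o \<Rightarrow> 'm"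
  plus :: "'m \<Rightarrow> 'm \<Rightarrow> 'm"
  negm :: "'m \<Rightarrow> 'm"

definition hom :: "('o,'m) acat \<Rightarrow> 'o \<Rightarrow> 'o \<Rightarrow> 'm set" where
  "hom C a b = {f \<in> Arr C. dom C f = a \<and> cod C f = b}"

definition category :: "('o,'m) acat \<Rightarrow> bool" where
  "category C \<longleftrightarrow>
     (\<forall>f\<in>Arr C. dom C f \<in> Obj C \<and> cod C f \<in> Obj C) \<and>
     (\<forall>a\<in>Obj C. idm C a \<in> hom C a a) \<and>
     (\<forall>a\<in>Obj C. \<forall>b\<in>Obj C. \<forall>c\<in>Obj C. \<forall>f\<in>hom C a b. \<forall>g\<in>hom C b c.
         comp C g f \<in> hom C a c) \<and>
     (\<forall>f\<in>Arr C. comp C (idm C (cod C f)) f = f \<and> comp C f (idm C (dom C f)) = f) \<and>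
     (\<forall>f\<in>Arr C. \<forall>g\<in>Arr C. \<forall>h\<in>Arr C. cod C f = dom C g \<longrightarrow> cod C g = dom C h \<longrightarrow>
         comp C h (comp C g f) = comp C (comp C h g) f)"

definition preadditive :: "('o,'m) acat \<Rightarrow> bool" where
  "preadditive C \<longleftrightarrow> category C \<and>
     (\<forall>a\<in>Obj C. \<forall>b\<in>Obj C.
        zer C a b \<in> hom C a b \<and>
        (\<forall>f\<in>hom C a b. \<forall>g\<in>hom C a b. plus C f g \<in> hom C a b) \<and>
        (\<forall>f\<in>hom C a b. negm C f \<in> hom C a b) \<and>
        (\<forall>f\<in>hom C a b. \<forall>g\<in>hom C a b. \<forall>h\<in>hom C a b.
            plus C (plus C f g) h = plus C f (plus C g h)) \<and>
        (\<forall>f\<in>hom C a b. \<forall>g\<in>hom C a b. plus C f g = plus C g f) \<and>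
        (\<forall>f\<in>hom C a b. plus C f (zer C a b) = f) \<and>
        (\<forall>f\<in>hom C a b. plus C f (negm C f) = zer C a b)) \<and>
     (\<forall>a\<in>Obj C. \<forall>b\<in>Obj C. \<forall>c\<in>Obj C. \<forall>f\<in>hom C a b. \<forall>g\<in>hom C a b. \<forall>h\<in>hom C b c.
        comp C h (plus C f g) = plus C (comp C h f) (comp C h g)) \<and>
     (\<forall>a\<in>Obj C. \<forall>b\<in>Obj C. \<forall>c\<in>Obj C. \<forall>h\<in>hom C a b. \<forall>f\<in>hom C b c. \<forall>g\<in>hom C b c.
        comp C (plus C f g) h = plus C (comp C f h) (comp C g h))"

definition zero_object :: "('o,'m) acat \<Rightarrow> 'o \<Rightarrow> bool" where
  "zero_object C z \<longleftrightarrow> z \<in> Obj C \<and>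
     (\<forall>a\<in>Obj C. hom C z a = {zer C z a} \<and> hom C a z = {zer C a z})"

definition biproduct ::
  "('o,'m) acat \<Rightarrow> 'o \<Rightarrow> 'o \<Rightarrow> 'o \<Rightarrow> 'm \<Rightarrow> 'm \<Rightarrow> 'm \<Rightarrow> 'm \<Rightarrow> bool" where
  "biproduct C a b s p1 p2 i1 i2 \<longleftrightarrow> s \<in> Obj C \<and>
     p1 \<in> hom C s a \<and> p2 \<in> hom C s b \<and> i1 \<in> hom C a s \<and> i2 \<in> hom C b s \<and>
     comp C p1 i1 = idm C a \<and> comp C p2 i2 = idm C b \<and>
     comp C p2 i1 = zer C a b \<and> comp C p1 i2 = zer C b a \<and>
     plus C (comp C i1 p1) (comp C i2 p2) = idm C s"

definition mono :: "('o,'m) acat \<Rightarrow> 'm \<Rightarrow> bool" where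
  "mono C f \<longleftrightarrow> f \<in> Arr C \<and>
     (\<forall>g\<in>Arr C. \<forall>h\<in>Arr C. cod C g = dom C f \<longrightarrow> cod C h = dom C f \<longrightarrow> dom C g = dom C h \<longrightarrow>
        comp C f g = comp C f h \<longrightarrow> g = h)"

definition epi :: "('o,'m) acat \<Rightarrow> 'm \<Rightarrow> bool" where
  "epi C f \<longleftrightarrow> f \<in> Arr C \<and>
     (\<forall>g\<in>Arr C. \<forall>h\<in>Arr C. dom C g = cod C f \<longrightarrow> dom C h = cod C f \<longrightarrow> cod C g = cod C h \<longrightarrow>
        comp C g f = comp C h f \<longrightarrow> g = h)"

definition is_kernel :: "('o,'m) acat \<Rightarrow> 'm \<Rightarrow> 'm \<Rightarrow> bool" where
  "is_kernel C f k \<longleftrightarrow> f \<in> Arr C \<and> k \<in> Arr C \<and> cod C k = dom C f \<and>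
     comp C f k = zer C (dom C k) (cod C f) \<and>
     (\<forall>g\<in>Arr C. cod C g = dom C f \<longrightarrow> comp C f g = zer C (dom C g) (cod C f) \<longrightarrow>
        (\<exists>!u. u \<in> hom C (dom C g) (dom C k) \<and> comp C k u = g))"

definition is_cokernel :: "('o,'m) acat \<Rightarrow> 'm \<Rightarrow> 'm \<Rightarrow> bool" where
  "is_cokernel C f c \<longleftrightarrow> f \<in> Arr C \<and> c \<in> Arr C \<and> dom C c = cod C f \<and>
     comp C c f = zer C (dom C f) (cod C c) \<and>
     (\<forall>g\<in>Arr C. dom C g = cod C f \<longrightarrow> comp C g f = zer C (dom C f) (cod C g) \<longrightarrow>
        (\<exists>!u. u \<in> hom C (cod C c) (cod C g) \<and> comp C u c = g))"

definition abelian :: "('o,'m) acat \<Rightarrow> bool" where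
  "abelian C \<longleftrightarrow> preadditive C \<and>
     (\<exists>z. zero_object C z) \<and>
     (\<forall>a\<in>Obj C. \<forall>b\<in>Obj C. \<exists>s p1 p2 i1 i2. biproduct C a b s p1 p2 i1 i2) \<and>
     (\<forall>f\<in>Arr C. (\<exists>k. is_kernel C f k) \<and> (\<exists>c. is_cokernel C f c)) \<and>
     (\<forall>f. mono C f \<longrightarrow> (\<exists>g. is_kernel C g f)) \<and>
     (\<forall>f. epi C f \<longrightarrow> (\<exists>g. is_cokernel C g f))"

text \<open>Short exact sequence 0 \<rightarrow> dom f \<rightarrow> cod f = dom g \<rightarrow> cod g \<rightarrow> 0.\<close>
definition ses :: "('o,'m) acat \<Rightarrow> 'm \<Rightarrow> 'm \<Rightarrow> bool" where
  "ses C f g \<longleftrightarrow> is_kernel C g f \<and> is_cokernel C f g"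

definition is_unit_end :: "('o,'m) acat \<Rightarrow> 'o \<Rightarrow> 'm \<Rightarrow> bool" where
  "is_unit_end C a f \<longleftrightarrow> (\<exists>g\<in>hom C a a. comp C g f = idm C a \<and> comp C f g = idm C a)"

definition local_end :: "('o,'m) acat \<Rightarrow> 'o \<Rightarrow> bool" where
  "local_end C a \<longleftrightarrow> a \<in> Obj C \<and> idm C a \<noteq> zer C a a \<and>
     (\<forall>f\<in>hom C a a. \<forall>g\<in>hom C a a. \<not> is_unit_end C a f \<longrightarrow> \<not> is_unit_end C a g \<longrightarrow>
        \<not> is_unit_end C a (plus C f g))"

definition msum :: "('o,'m) acat \<Rightarrow> 'o \<Rightarrow> 'o \<Rightarrow> 'm list \<Rightarrow> 'm" where
  "msum C a b fs = foldr (plus C) fs (zer C a b)"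

text \<open>Every object is a finite direct sum of objects with local endomorphism rings.\<close>
definition krull_schmidt :: "('o,'m) acat \<Rightarrow> bool" where
  "krull_schmidt C \<longleftrightarrow> (\<forall>a\<in>Obj C. \<exists>bs ins prs.
     length ins = length bs \<and> length prs = length bs \<and>
     (\<forall>k<length bs. local_end C (bs!k) \<and> ins!k \<in> hom C (bs!k) a \<and> prs!k \<in> hom C a (bs!k)) \<and>
     (\<forall>k<length bs. \<forall>l<length bs.
        comp C (prs!k) (ins!l) = (if k = l then idm C (bs!k) else zer C (bs!l) (bs!k))) \<and>
     msum C a a (map2 (comp C) ins prs) = idm C a)"

definition projective :: "('o,'m) acat \<Rightarrow> 'o \<Rightarrow> bool" where
  "projective C P \<longleftrightarrow> P \<in> Obj C \<and>
     (\<forall>e h. epi C e \<longrightarrow> h \<in> hom C P (cod C e) \<longrightarrow>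
        (\<exists>h'\<in>hom C P (dom C e). comp C e h' = h))"

definition injective :: "('o,'m) acat \<Rightarrow> 'o \<Rightarrow> bool" where
  "injective C I \<longleftrightarrow> I \<in> Obj C \<and>
     (\<forall>m h. mono C m \<longrightarrow> h \<in> hom C (dom C m) I \<longrightarrow>
        (\<exists>h'\<in>hom C (cod C m) I. comp C h' m = h))"

definition enough_projectives :: "('o,'m) acat \<Rightarrow> bool" where
  "enough_projectives C \<longleftrightarrow>
     (\<forall>a\<in>Obj C. \<exists>P e. projective C P \<and> e \<in> hom C P a \<and> epi C e)"

definition enough_injectives :: "('o,'m) acat \<Rightarrow> bool" where
  "enough_injectives C \<longleftrightarrow>
     (\<forall>a\<in>Obj C. \<exists>I m. injective C I \<and> m \<in> hom C a I \<and> mono C m)"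

text \<open>Ext^1(A,B) = 0: every extension 0 \<rightarrow> B \<rightarrow> E \<rightarrow> A \<rightarrow> 0 splits (the Yoneda
class of every extension is the zero = split class).\<close>
definition ext1_zero :: "('o,'m) acat \<Rightarrow> 'o \<Rightarrow> 'o \<Rightarrow> bool" where
  "ext1_zero C A B \<longleftrightarrow>
     (\<forall>f g. ses C f g \<longrightarrow> dom C f = B \<longrightarrow> cod C g = A \<longrightarrow>
        (\<exists>s\<in>hom C A (dom C g). comp C g s = idm C A))"

definition cotorsion_pair :: "('o,'m) acat \<Rightarrow> 'o set \<Rightarrow> 'o set \<Rightarrow> bool" where
  "cotorsion_pair C X Y \<longleftrightarrow>
     X = {A\<in>Obj C. \<forall>B\<in>Y. ext1_zero C A B} \<and>
     Y = {B\<in>Obj C. \<forall>A\<in>X. ext1_zero C A B}"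

definition complete_cotorsion_pair :: "('o,'m) acat \<Rightarrow> 'o set \<Rightarrow> 'o set \<Rightarrow> bool" where
  "complete_cotorsion_pair C X Y \<longleftrightarrow> cotorsion_pair C X Y \<and>
     (\<forall>A\<in>Obj C.
        (\<exists>f g. ses C f g \<and> dom C f \<in> Y \<and> dom C g \<in> X \<and> cod C g = A) \<and>
        (\<exists>f g. ses C f g \<and> dom C f = A \<and> dom C g \<in> Y \<and> cod C g \<in> X))"

definition resolving :: "('o,'m) acat \<Rightarrow> 'o set \<Rightarrow> bool" where
  "resolving C X \<longleftrightarrow> X \<subseteq> Obj C \<and>
     (\<forall>P. projective C P \<longrightarrow> P \<in> X) \<and>
     (\<forall>f g. ses C f g \<longrightarrow> dom C f \<in> X \<longrightarrow> cod C g \<in> X \<longrightarrow> dom C g \<in> X) \<and>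
     (\<forall>f g. ses C f g \<longrightarrow> dom C g \<in> X \<longrightarrow> cod C g \<in> X \<longrightarrow> dom C f \<in> X)"

definition hereditary_cotorsion_pair :: "('o,'m) acat \<Rightarrow> 'o set \<Rightarrow> 'o set \<Rightarrow> bool" where
  "hereditary_cotorsion_pair C X Y \<longleftrightarrow> cotorsion_pair C X Y \<and> resolving C X"

definition complete_hereditary_cotorsion_triple ::
  "('o,'m) acat \<Rightarrow> 'o set \<Rightarrow> 'o set \<Rightarrow> 'o set \<Rightarrow> bool" where
  "complete_hereditary_cotorsion_triple C X Z Y \<longleftrightarrow>
     complete_cotorsion_pair C X Z \<and> hereditary_cotorsion_pair C X Z \<and>
     complete_cotorsion_pair C Z Y \<and> hereditary_cotorsion_pair C Z Y"

definition F_conflation :: "('o,'m) acat \<Rightarrow> 'o set \<Rightarrow> 'm \<Rightarrow> 'm \<Rightarrow> bool" where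
  "F_conflation C X f g \<longleftrightarrow> ses C f g \<and>
     (\<forall>W\<in>X. \<forall>h\<in>hom C W (cod C g). \<exists>h'\<in>hom C W (dom C g). comp C g h' = h)"

text \<open>P is projective in (A, F_X): Hom(P,-) sends every conflation
0 \<rightarrow> A \<rightarrow> B \<rightarrow> C \<rightarrow> 0 to an exact sequence of abelian groups
0 \<rightarrow> Hom(P,A) \<rightarrow> Hom(P,B) \<rightarrow> Hom(P,C) \<rightarrow> 0.\<close>
definition F_projective :: "('o,'m) acat \<Rightarrow> 'o set \<Rightarrow> 'o \<Rightarrow> bool" where
  "F_projective C X P \<longleftrightarrow> P \<in> Obj C \<and>
     (\<forall>f g. F_conflation C X f g \<longrightarrow>
        inj_on (comp C f) (hom C P (dom C f)) \<and>
        comp C f ` hom C P (dom C f) =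
          {u \<in> hom C P (dom C g). comp C g u = zer C P (cod C g)} \<and>
        comp C g ` hom C P (dom C g) = hom C P (cod C g))"

text \<open>I is injective in (A, F_X): Hom(-,I) sends every conflation to an exact
sequence 0 \<rightarrow> Hom(C,I) \<rightarrow> Hom(B,I) \<rightarrow> Hom(A,I) \<rightarrow> 0.\<close>
definition F_injective :: "('o,'m) acat \<Rightarrow> 'o set \<Rightarrow> 'o \<Rightarrow> bool" where
  "F_injective C X I \<longleftrightarrow> I \<in> Obj C \<and>
     (\<forall>f g. F_conflation C X f g \<longrightarrow>
        inj_on (\<lambda>u. comp C u g) (hom C (cod C g) I) \<and>
        (\<lambda>u. comp C u g) ` hom C (cod C g) I =
          {v \<in> hom C (dom C g) I. comp C v f = zer C (dom C f) I} \<and>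
        (\<lambda>v. comp C v f) ` hom C (dom C g) I = hom C (dom C f) I)"

definition F_enough_projectives :: "('o,'m) acat \<Rightarrow> 'o set \<Rightarrow> bool" where
  "F_enough_projectives C X \<longleftrightarrow>
     (\<forall>a\<in>Obj C. \<exists>f g. F_conflation C X f g \<and> F_projective C X (dom C g) \<and> cod C g = a)"

definition F_enough_injectives :: "('o,'m) acat \<Rightarrow> 'o set \<Rightarrow> bool" where
  "F_enough_injectives C X \<longleftrightarrow>
     (\<forall>a\<in>Obj C. \<exists>f g. F_conflation C X f g \<and> F_injective C X (cod C f) \<and> dom C f = a)"

end

theory Submission
  imports Defs
begin

text \<open>Conflations of \<open>F\<^sub>X\<close> are the short exact sequences along which maps out of
  objects of \<open>X\<close> lift, so objects of \<open>X\<close> are \<open>F\<^sub>X\<close>-projective by definition.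
  Objects of \<open>Y\<close> are \<open>F\<^sub>X\<close>-injective because a conflation starting in \<open>Y\<close> splits:
  compare it with an \<open>(X,Z)\<close>-precover of its end term and extend the resulting map from an
  object of \<open>Z\<close> to one of \<open>Y\<close> along a monomorphism, which is possible as \<open>Y \<inter> Z\<close>
  consists of injectives. Completeness supplies enough conflations: an \<open>(X,Z)\<close>-precover
  \<open>0 \<rightarrow> Z' \<rightarrow> X' \<rightarrow> A \<rightarrow> 0\<close> is a conflation since \<open>Ext\<^sup>1(X,Z) = 0\<close>, and a
  \<open>(Z,Y)\<close>-envelope \<open>0 \<rightarrow> A \<rightarrow> Y' \<rightarrow> Z'' \<rightarrow> 0\<close> is one because \<open>Z''\<close> has an
  \<open>(X,Z)\<close>-precover with projective middle term, \<open>X \<inter> Z\<close> being the projectives.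
  Conversely, an \<open>F\<^sub>X\<close>-projective object splits off its precover, which forces
  \<open>Ext\<^sup>1(P,Z) = 0\<close>, and dually for \<open>F\<^sub>X\<close>-injectives.\<close>

definition mdiff :: "('o,'m) acat \<Rightarrow> 'm \<Rightarrow> 'm \<Rightarrow> 'm" where
  "mdiff C f g = plus C f (negm C g)"

locale abelian_category =
  fixes C :: "('o,'m) acat"
  assumes abelian: "abelian C"
begin

lemma preadditive: "preadditive C"
  using abelian unfolding abelian_def by blast

lemma category: "category C"
  using preadditive unfolding preadditive_def by blast

lemma in_hom_iff: "f \<in> hom C a b \<longleftrightarrow> f \<in> Arr C \<and> dom C f = a \<and> cod C f = b"
  by (simp add: hom_def)

lemma arr_in_hom: "f \<in> Arr C \<Longrightarrow> f \<in> hom C (dom C f) (cod C f)"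
  by (simp add: hom_def)

lemma hom_objs: "f \<in> hom C a b \<Longrightarrow> a \<in> Obj C \<and> b \<in> Obj C"
  using category unfolding category_def hom_def by auto

lemma id_in_hom: "a \<in> Obj C \<Longrightarrow> idm C a \<in> hom C a a"
  using category unfolding category_def by auto

lemma comp_in_hom: "f \<in> hom C a b \<Longrightarrow> g \<in> hom C b c \<Longrightarrow> comp C g f \<in> hom C a c"
  using category hom_objs unfolding category_def by metis

lemma comp_id_left: "f \<in> hom C a b \<Longrightarrow> comp C (idm C b) f = f"
  using category unfolding category_def hom_def by auto

lemma comp_id_right: "f \<in> hom C a b \<Longrightarrow> comp C f (idm C a) = f"
  using category unfolding category_def hom_def by auto

lemma comp_assoc:
  "f \<in> hom C a b \<Longrightarrow> g \<in> hom C b c \<Longrightarrow> h \<in> hom C c d \<Longrightarrow>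
   comp C h (comp C g f) = comp C (comp C h g) f"
  using category unfolding category_def hom_def by auto

lemma hom_abelian_group:
  assumes f: "f \<in> hom C a b" and g: "g \<in> hom C a b" and h: "h \<in> hom C a b"
  shows "zer C a b \<in> hom C a b" "plus C f g \<in> hom C a b" "negm C f \<in> hom C a b"
    "plus C (plus C f g) h = plus C f (plus C g h)" "plus C f g = plus C g f"
    "plus C f (zer C a b) = f" "plus C f (negm C f) = zer C a b"
proof -
  have "\<forall>a\<in>Obj C. \<forall>b\<in>Obj C. zer C a b \<in> hom C a b \<and>
    (\<forall>f\<in>hom C a b. \<forall>g\<in>hom C a b. plus C f g \<in> hom C a b) \<and>
    (\<forall>f\<in>hom C a b. negm C f \<in> hom C a b) \<and>
    (\<forall>f\<in>hom C a b. \<forall>g\<in>hom C a b. \<forall>h\<in>hom C a b.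
       plus C (plus C f g) h = plus C f (plus C g h)) \<and>
    (\<forall>f\<in>hom C a b. \<forall>g\<in>hom C a b. plus C f g = plus C g f) \<and>
    (\<forall>f\<in>hom C a b. plus C f (zer C a b) = f) \<and>
    (\<forall>f\<in>hom C a b. plus C f (negm C f) = zer C a b)"
    using preadditive unfolding preadditive_def by (elim conjE) assumption
  then have group: "zer C a b \<in> hom C a b \<and>
    (\<forall>f\<in>hom C a b. \<forall>g\<in>hom C a b. plus C f g \<in> hom C a b) \<and>
    (\<forall>f\<in>hom C a b. negm C f \<in> hom C a b) \<and>
    (\<forall>f\<in>hom C a b. \<forall>g\<in>hom C a b. \<forall>h\<in>hom C a b.
       plus C (plus C f g) h = plus C f (plus C g h)) \<and>
    (\<forall>f\<in>hom C a b. \<forall>g\<in>hom C a b. plus C f g = plus C g f) \<and>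
    (\<forall>f\<in>hom C a b. plus C f (zer C a b) = f) \<and>
    (\<forall>f\<in>hom C a b. plus C f (negm C f) = zer C a b)"
    using hom_objs[OF f] by blast
  show "zer C a b \<in> hom C a b" "plus C f g \<in> hom C a b" "negm C f \<in> hom C a b"
    "plus C (plus C f g) h = plus C f (plus C g h)" "plus C f g = plus C g f"
    "plus C f (zer C a b) = f" "plus C f (negm C f) = zer C a b"
    using group f g h by blast+
qed

lemma zer_in_hom: "a \<in> Obj C \<Longrightarrow> b \<in> Obj C \<Longrightarrow> zer C a b \<in> hom C a b"
  using preadditive unfolding preadditive_def by (elim conjE) blast

lemma plus_in_hom: "f \<in> hom C a b \<Longrightarrow> g \<in> hom C a b \<Longrightarrow> plus C f g \<in> hom C a b"
  using hom_abelian_group(2) .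

lemma negm_in_hom: "f \<in> hom C a b \<Longrightarrow> negm C f \<in> hom C a b"
  using hom_abelian_group(3) .

lemma plus_assoc:
  "f \<in> hom C a b \<Longrightarrow> g \<in> hom C a b \<Longrightarrow> h \<in> hom C a b \<Longrightarrow>
   plus C (plus C f g) h = plus C f (plus C g h)"
  using hom_abelian_group(4) .

lemma plus_commute: "f \<in> hom C a b \<Longrightarrow> g \<in> hom C a b \<Longrightarrow> plus C f g = plus C g f"
  using hom_abelian_group(5) .

lemma plus_zer: "f \<in> hom C a b \<Longrightarrow> plus C f (zer C a b) = f"
  using hom_abelian_group(6) .

lemma plus_negm: "f \<in> hom C a b \<Longrightarrow> plus C f (negm C f) = zer C a b"
  using hom_abelian_group(7) .

lemma comp_plus_right:
  assumes "f \<in> hom C a b" "g \<in> hom C a b" "h \<in> hom C b c"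
  shows "comp C h (plus C f g) = plus C (comp C h f) (comp C h g)"
proof -
  have "a \<in> Obj C" "b \<in> Obj C" "c \<in> Obj C"
    using assms hom_objs by auto
  with assms preadditive show ?thesis
    unfolding preadditive_def by blast
qed

lemma comp_plus_left:
  assumes "h \<in> hom C a b" "f \<in> hom C b c" "g \<in> hom C b c"
  shows "comp C (plus C f g) h = plus C (comp C f h) (comp C g h)"
proof -
  have "a \<in> Obj C" "b \<in> Obj C" "c \<in> Obj C"
    using assms hom_objs by auto
  with assms preadditive show ?thesis
    unfolding preadditive_def by blast
qed

lemma zer_plus: "f \<in> hom C a b \<Longrightarrow> plus C (zer C a b) f = f"
  by (metis hom_objs plus_commute plus_zer zer_in_hom)

lemma negm_unique:
  assumes f: "f \<in> hom C a b" and g: "g \<in> hom C a b" and fg: "plus C f g = zer C a b"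
  shows "g = negm C f"
proof -
  have n: "negm C f \<in> hom C a b"
    using f negm_in_hom by auto
  have "g = plus C g (plus C f (negm C f))"
    using f g plus_negm plus_zer by simp
  also have "\<dots> = plus C (plus C g f) (negm C f)"
    using f g n plus_assoc by simp
  also have "\<dots> = negm C f"
    using f g fg n plus_commute zer_plus by simp
  finally show ?thesis .
qed

lemma idempotent_eq_zer:
  assumes x: "x \<in> hom C a b" and xx: "plus C x x = x"
  shows "x = zer C a b"
proof -
  have n: "negm C x \<in> hom C a b"
    using x negm_in_hom by auto
  have "x = plus C x (plus C x (negm C x))"
    using x plus_negm plus_zer by simp
  also have "\<dots> = plus C (plus C x x) (negm C x)"
    using x n plus_assoc by metis
  also have "\<dots> = zer C a b"
    using x xx plus_negm by simp
  finally show ?thesis .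
qed

lemma comp_zer_right:
  assumes h: "h \<in> hom C b c" and a: "a \<in> Obj C"
  shows "comp C h (zer C a b) = zer C a c"
proof -
  have z: "zer C a b \<in> hom C a b"
    using h a hom_objs zer_in_hom by auto
  have "plus C (comp C h (zer C a b)) (comp C h (zer C a b)) = comp C h (zer C a b)"
    using comp_plus_right[OF z z h] plus_zer[OF z] by simp
  then show ?thesis
    using idempotent_eq_zer comp_in_hom[OF z h] by blast
qed

lemma comp_zer_left:
  assumes h: "h \<in> hom C a b" and c: "c \<in> Obj C"
  shows "comp C (zer C b c) h = zer C a c"
proof -
  have z: "zer C b c \<in> hom C b c"
    using h c hom_objs zer_in_hom by auto
  have "plus C (comp C (zer C b c) h) (comp C (zer C b c) h) = comp C (zer C b c) h"
    using comp_plus_left[OF h z z] plus_zer[OF z] by simp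
  then show ?thesis
    using idempotent_eq_zer comp_in_hom[OF h z] by blast
qed

lemma comp_negm_right:
  assumes f: "f \<in> hom C a b" and h: "h \<in> hom C b c"
  shows "comp C h (negm C f) = negm C (comp C h f)"
proof -
  have n: "negm C f \<in> hom C a b"
    using f negm_in_hom by auto
  have "plus C (comp C h f) (comp C h (negm C f)) = zer C a c"
    using comp_plus_right[OF f n h] plus_negm[OF f] comp_zer_right h f hom_objs by simp
  then show ?thesis
    using negm_unique comp_in_hom f h n by blast
qed

lemma comp_negm_left:
  assumes h: "h \<in> hom C a b" and f: "f \<in> hom C b c"
  shows "comp C (negm C f) h = negm C (comp C f h)"
proof -
  have n: "negm C f \<in> hom C b c"
    using f negm_in_hom by auto
  have "plus C (comp C f h) (comp C (negm C f) h) = zer C a c"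
    using comp_plus_left[OF h f n] plus_negm[OF f] comp_zer_left h f hom_objs by simp
  then show ?thesis
    using negm_unique comp_in_hom f h n by blast
qed

lemma mdiff_in_hom: "f \<in> hom C a b \<Longrightarrow> g \<in> hom C a b \<Longrightarrow> mdiff C f g \<in> hom C a b"
  unfolding mdiff_def using plus_in_hom negm_in_hom by blast

lemma eq_if_mdiff_eq_zer:
  assumes f: "f \<in> hom C a b" and g: "g \<in> hom C a b" and fg: "mdiff C f g = zer C a b"
  shows "f = g"
proof -
  have n: "negm C g \<in> hom C a b"
    using g negm_in_hom by auto
  have "f = plus C f (plus C (negm C g) g)"
    using f g n plus_negm plus_commute plus_zer by metis
  also have "\<dots> = plus C (mdiff C f g) g"
    unfolding mdiff_def using plus_assoc f g n by simp
  also have "\<dots> = g"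
    using g fg zer_plus by simp
  finally show ?thesis .
qed

lemma mdiff_self: "f \<in> hom C a b \<Longrightarrow> mdiff C f f = zer C a b"
  unfolding mdiff_def using plus_negm by simp

lemma negm_zer: "a \<in> Obj C \<Longrightarrow> b \<in> Obj C \<Longrightarrow> negm C (zer C a b) = zer C a b"
  using negm_unique plus_zer zer_in_hom by metis

lemma mdiff_zer: "f \<in> hom C a b \<Longrightarrow> mdiff C f (zer C a b) = f"
  unfolding mdiff_def using hom_objs negm_zer plus_zer by simp

lemma comp_mdiff_right:
  assumes "f \<in> hom C a b" "g \<in> hom C a b" "h \<in> hom C b c"
  shows "comp C h (mdiff C f g) = mdiff C (comp C h f) (comp C h g)"
  unfolding mdiff_def
  using assms comp_plus_right[OF assms(1) negm_in_hom[OF assms(2)] assms(3)] comp_negm_right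
  by simp

lemma comp_mdiff_left:
  assumes "h \<in> hom C a b" "f \<in> hom C b c" "g \<in> hom C b c"
  shows "comp C (mdiff C f g) h = mdiff C (comp C f h) (comp C g h)"
  unfolding mdiff_def
  using assms comp_plus_left[OF assms(1,2) negm_in_hom[OF assms(3)]] comp_negm_left
  by simp

lemma mono_cancel:
  "mono C f \<Longrightarrow> a \<in> hom C x (dom C f) \<Longrightarrow> b \<in> hom C x (dom C f) \<Longrightarrow>
   comp C f a = comp C f b \<Longrightarrow> a = b"
  unfolding mono_def hom_def by auto

lemma epi_cancel:
  "epi C e \<Longrightarrow> a \<in> hom C (cod C e) y \<Longrightarrow> b \<in> hom C (cod C e) y \<Longrightarrow>
   comp C a e = comp C b e \<Longrightarrow> a = b"
  unfolding epi_def hom_def by auto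

lemma mono_in_hom: "mono C m \<Longrightarrow> m \<in> hom C (dom C m) (cod C m)"
  unfolding mono_def hom_def by blast

lemma epi_in_hom: "epi C e \<Longrightarrow> e \<in> hom C (dom C e) (cod C e)"
  unfolding epi_def hom_def by blast

lemma kernelD:
  assumes "is_kernel C g f"
  shows "f \<in> hom C (dom C f) (dom C g)" "g \<in> hom C (dom C g) (cod C g)"
    "comp C g f = zer C (dom C f) (cod C g)"
  using assms unfolding is_kernel_def hom_def by auto

lemma cokernelD:
  assumes "is_cokernel C f c"
  shows "f \<in> hom C (dom C f) (cod C f)" "c \<in> hom C (cod C f) (cod C c)"
    "comp C c f = zer C (dom C f) (cod C c)"
  using assms unfolding is_cokernel_def hom_def by auto

lemma kernel_factor_unique:
  assumes k: "is_kernel C g f" and t: "t \<in> hom C x (dom C g)"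
    and gt: "comp C g t = zer C x (cod C g)"
  shows "\<exists>!u. u \<in> hom C x (dom C f) \<and> comp C f u = t"
proof -
  have "t \<in> Arr C" "cod C t = dom C g" "dom C t = x"
    using t in_hom_iff by auto
  with k gt show ?thesis
    unfolding is_kernel_def by metis
qed

lemma kernel_factor:
  "is_kernel C g f \<Longrightarrow> t \<in> hom C x (dom C g) \<Longrightarrow> comp C g t = zer C x (cod C g) \<Longrightarrow>
   \<exists>u\<in>hom C x (dom C f). comp C f u = t"
  using kernel_factor_unique by blast

lemma cokernel_factor_unique:
  assumes c: "is_cokernel C f c" and t: "t \<in> hom C (cod C f) y"
    and tf: "comp C t f = zer C (dom C f) y"
  shows "\<exists>!u. u \<in> hom C (cod C c) y \<and> comp C u c = t"
proof -
  have "t \<in> Arr C" "dom C t = cod C f" "cod C t = y"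
    using t in_hom_iff by auto
  with c tf show ?thesis
    unfolding is_cokernel_def by metis
qed

lemma cokernel_factor:
  "is_cokernel C f c \<Longrightarrow> t \<in> hom C (cod C f) y \<Longrightarrow> comp C t f = zer C (dom C f) y \<Longrightarrow>
   \<exists>u\<in>hom C (cod C c) y. comp C u c = t"
  using cokernel_factor_unique by blast

lemma kernel_is_mono:
  assumes k: "is_kernel C g f"
  shows "mono C f"
  unfolding mono_def
proof (intro conjI ballI impI)
  note f = kernelD(1)[OF k] and g = kernelD(2)[OF k] and gf = kernelD(3)[OF k]
  show "f \<in> Arr C"
    using f in_hom_iff by auto
  fix a b
  assume "a \<in> Arr C" "b \<in> Arr C" "cod C a = dom C f" "cod C b = dom C f"
    "dom C a = dom C b" and fab: "comp C f a = comp C f b"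
  then have a: "a \<in> hom C (dom C a) (dom C f)" and b: "b \<in> hom C (dom C a) (dom C f)"
    using in_hom_iff by auto
  have "comp C g (comp C f a) = zer C (dom C a) (cod C g)"
    using comp_assoc[OF a f g] gf comp_zer_left[OF a] hom_objs[OF g] by simp
  then show "a = b"
    using kernel_factor_unique[OF k comp_in_hom[OF a f]] a b fab by metis
qed

lemma cokernel_is_epi:
  assumes c: "is_cokernel C f e"
  shows "epi C e"
  unfolding epi_def
proof (intro conjI ballI impI)
  note f = cokernelD(1)[OF c] and e = cokernelD(2)[OF c] and ef = cokernelD(3)[OF c]
  show "e \<in> Arr C"
    using e in_hom_iff by auto
  fix a b
  assume "a \<in> Arr C" "b \<in> Arr C" "dom C a = cod C e" "dom C b = cod C e"
    "cod C a = cod C b" and abe: "comp C a e = comp C b e"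
  then have a: "a \<in> hom C (cod C e) (cod C a)" and b: "b \<in> hom C (cod C e) (cod C a)"
    using in_hom_iff by auto
  have "comp C (comp C a e) f = zer C (dom C f) (cod C a)"
    using comp_assoc[OF f e a] ef comp_zer_right[OF a] hom_objs[OF f] by simp
  then show "a = b"
    using cokernel_factor_unique[OF c comp_in_hom[OF e a]] a b abe by metis
qed

lemma epi_is_cokernel_of_kernel:
  assumes e: "epi C e" and k: "is_kernel C e k"
  shows "is_cokernel C k e"
proof -
  obtain g where g: "is_cokernel C g e"
    using abelian e unfolding abelian_def by blast
  note k' = kernelD[OF k] and g' = cokernelD[OF g]
  have "dom C e = cod C g"
    using g'(2) in_hom_iff by auto
  then obtain w where w: "w \<in> hom C (dom C g) (dom C k)" "comp C k w = g"
    using kernel_factor[OF k, of g] g' by auto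
  show ?thesis
    unfolding is_cokernel_def
  proof (intro conjI allI ballI impI)
    show "k \<in> Arr C" "e \<in> Arr C" "dom C e = cod C k" "comp C e k = zer C (dom C k) (cod C e)"
      using k' in_hom_iff by auto
    fix t
    assume t: "t \<in> Arr C" "dom C t = cod C k" "comp C t k = zer C (dom C k) (cod C t)"
    then have th: "t \<in> hom C (dom C e) (cod C t)"
      using k' in_hom_iff by auto
    have "comp C t g = comp C (comp C t k) w"
      using comp_assoc[OF w(1) k'(1) th] w(2) by simp
    also have "\<dots> = zer C (dom C g) (cod C t)"
      using t(3) comp_zer_left[OF w(1)] hom_objs[OF th] by simp
    finally have "comp C t g = zer C (dom C g) (cod C t)" .
    then show "\<exists>!u. u \<in> hom C (cod C e) (cod C t) \<and> comp C u e = t"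
      using cokernel_factor_unique[OF g] th \<open>dom C e = cod C g\<close> by simp
  qed
qed

lemma sesD:
  assumes "ses C f g"
  shows "f \<in> hom C (dom C f) (dom C g)" "g \<in> hom C (dom C g) (cod C g)"
    "comp C g f = zer C (dom C f) (cod C g)" "mono C f" "epi C g" "cod C f = dom C g"
  using assms kernelD kernel_is_mono cokernel_is_epi in_hom_iff unfolding ses_def by blast+

lemma ses_of_epi: "epi C e \<Longrightarrow> \<exists>k. ses C k e"
  using abelian epi_is_cokernel_of_kernel unfolding abelian_def epi_def ses_def by blast

end

section \<open>Duality\<close>

definition opposite :: "('o,'m) acat \<Rightarrow> ('o,'m) acat" where
  "opposite C = \<lparr>Obj = Obj C, Arr = Arr C, dom = cod C, cod = dom C,
     comp = (\<lambda>g f. comp C f g), idm = idm C, zer = (\<lambda>a b. zer C b a),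
     plus = plus C, negm = negm C\<rparr>"

lemma opposite_simps [simp]:
  "Obj (opposite C) = Obj C" "Arr (opposite C) = Arr C"
  "dom (opposite C) = cod C" "cod (opposite C) = dom C"
  "comp (opposite C) g f = comp C f g" "idm (opposite C) = idm C"
  "zer (opposite C) a b = zer C b a" "plus (opposite C) = plus C" "negm (opposite C) = negm C"
  by (simp_all add: opposite_def)

lemma hom_opposite [simp]: "hom (opposite C) a b = hom C b a"
  unfolding hom_def by auto

lemma mono_opposite [simp]: "mono (opposite C) f = epi C f"
  unfolding mono_def epi_def by simp

lemma epi_opposite [simp]: "epi (opposite C) f = mono C f"
  unfolding mono_def epi_def by auto

lemma is_kernel_opposite [simp]: "is_kernel (opposite C) f k = is_cokernel C f k"
  unfolding is_kernel_def is_cokernel_def by simp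

lemma is_cokernel_opposite [simp]: "is_cokernel (opposite C) f k = is_kernel C f k"
  unfolding is_kernel_def is_cokernel_def by simp

lemma ses_opposite [simp]: "ses (opposite C) f g = ses C g f"
  unfolding ses_def by auto

lemma zero_object_opposite [simp]: "zero_object (opposite C) z = zero_object C z"
  unfolding zero_object_def by auto

lemma biproduct_opposite [simp]:
  "biproduct (opposite C) a b s p1 p2 i1 i2 = biproduct C a b s i1 i2 p1 p2"
  unfolding biproduct_def by auto

lemma injective_iff_projective_opposite: "injective C I = projective (opposite C) I"
  unfolding injective_def projective_def by simp

context abelian_category
begin

lemma category_opposite: "category (opposite C)"
  unfolding category_def
  apply (intro conjI ballI impI allI; simp only: opposite_simps hom_opposite)
  subgoal using arr_in_hom hom_objs by blast
  subgoal using arr_in_hom hom_objs by blast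
  subgoal using id_in_hom by blast
  subgoal using comp_in_hom by blast
  subgoal using arr_in_hom comp_id_right by blast
  subgoal using arr_in_hom comp_id_left by blast
  subgoal by (metis arr_in_hom comp_assoc)
  done

lemma preadditive_opposite: "preadditive (opposite C)"
  unfolding preadditive_def
  apply (intro conjI ballI impI allI category_opposite; (simp only: opposite_simps hom_opposite)?)
  subgoal using zer_in_hom by blast
  subgoal using plus_in_hom by blast
  subgoal using negm_in_hom by blast
  subgoal using plus_assoc by blast
  subgoal using plus_commute by blast
  subgoal using plus_zer by blast
  subgoal using plus_negm by blast
  subgoal using comp_plus_left by blast
  subgoal using comp_plus_right by blast
  done

lemma abelian_category_opposite: "abelian_category (opposite C)"
proof
  have "(\<exists>z. zero_object C z) \<and>
    (\<forall>a\<in>Obj C. \<forall>b\<in>Obj C. \<exists>s p1 p2 i1 i2. biproduct C a b s p1 p2 i1 i2) \<and>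
    (\<forall>f\<in>Arr C. (\<exists>k. is_kernel C f k) \<and> (\<exists>c. is_cokernel C f c)) \<and>
    (\<forall>f. mono C f \<longrightarrow> (\<exists>g. is_kernel C g f)) \<and>
    (\<forall>f. epi C f \<longrightarrow> (\<exists>g. is_cokernel C g f))"
    using abelian unfolding abelian_def by (elim conjE) (intro conjI)
  note A = this
  show "abelian (opposite C)"
    unfolding abelian_def
  proof (intro conjI preadditive_opposite)
    show "\<exists>z. zero_object (opposite C) z"
      using A by simp
    show "\<forall>a\<in>Obj (opposite C). \<forall>b\<in>Obj (opposite C).
      \<exists>s p1 p2 i1 i2. biproduct (opposite C) a b s p1 p2 i1 i2"
      using A by simp blast
    show "\<forall>f\<in>Arr (opposite C). (\<exists>k. is_kernel (opposite C) f k) \<and> (\<exists>c. is_cokernel (opposite C) f c)"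
      "\<forall>f. mono (opposite C) f \<longrightarrow> (\<exists>g. is_kernel (opposite C) g f)"
      "\<forall>f. epi (opposite C) f \<longrightarrow> (\<exists>g. is_cokernel (opposite C) g f)"
      using A by simp_all
  qed
qed

lemma ses_of_mono: "mono C m \<Longrightarrow> \<exists>c. ses C m c"
  using abelian_category.ses_of_epi[OF abelian_category_opposite, of m] by simp

section \<open>Pullbacks and pushouts of short exact sequences\<close>

lemma biproductD:
  assumes "biproduct C a b s p1 p2 i1 i2"
  shows "p1 \<in> hom C s a" "p2 \<in> hom C s b" "i1 \<in> hom C a s" "i2 \<in> hom C b s"
    "comp C p1 i1 = idm C a" "comp C p2 i2 = idm C b"
    "comp C p2 i1 = zer C a b" "comp C p1 i2 = zer C b a"
    "plus C (comp C i1 p1) (comp C i2 p2) = idm C s"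
  using assms unfolding biproduct_def by auto

lemma biproduct_decompose:
  assumes bp: "biproduct C a b s p1 p2 i1 i2" and t: "t \<in> hom C x s"
  shows "t = plus C (comp C i1 (comp C p1 t)) (comp C i2 (comp C p2 t))"
proof -
  note bp' = biproductD[OF bp]
  have "t = comp C (plus C (comp C i1 p1) (comp C i2 p2)) t"
    using bp'(9) comp_id_left[OF t] by simp
  also have "\<dots> = plus C (comp C i1 (comp C p1 t)) (comp C i2 (comp C p2 t))"
    using comp_plus_left[OF t comp_in_hom[OF bp'(1,3)] comp_in_hom[OF bp'(2,4)]]
      comp_assoc[OF t bp'(1,3)] comp_assoc[OF t bp'(2,4)] by simp
  finally show ?thesis .
qed

end

text \<open>The pullback of \<open>g : E \<rightarrow> A\<close> along \<open>h : W \<rightarrow> A\<close> is the kernel \<open>k\<close> of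
  \<open>m = g \<circ> p\<^sub>1 - h \<circ> p\<^sub>2 : E \<oplus> W \<rightarrow> A\<close>; its projection to \<open>W\<close> is again an
  epimorphism with kernel \<open>dom f\<close>.\<close>
locale pullback_of_ses = abelian_category +
  fixes f g h W S p1 p2 i1 i2 m k
  assumes ses: "ses C f g"
    and h: "h \<in> hom C W (cod C g)"
    and biproduct: "biproduct C (dom C g) W S p1 p2 i1 i2"
    and m_def: "m = mdiff C (comp C g p1) (comp C h p2)"
    and kernel: "is_kernel C m k"
begin

lemmas f = sesD(1)[OF ses] and g = sesD(2)[OF ses] and gf = sesD(3)[OF ses]
  and bp = biproductD[OF biproduct]

lemma m_in_hom: "m \<in> hom C S (cod C g)"
  unfolding m_def using mdiff_in_hom comp_in_hom bp(1,2) g h by blast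

lemma k_in_hom: "k \<in> hom C (dom C k) S"
  using kernelD(1)[OF kernel] m_in_hom in_hom_iff by auto

lemma m_comp_i1: "comp C m i1 = g"
proof -
  have "comp C m i1 = mdiff C (comp C (comp C g p1) i1) (comp C (comp C h p2) i1)"
    unfolding m_def using comp_mdiff_left bp(1-3) g h comp_in_hom by blast
  also have "comp C (comp C g p1) i1 = g"
    using comp_assoc[OF bp(3,1) g] bp(5) comp_id_right[OF g] by simp
  also have "comp C (comp C h p2) i1 = zer C (dom C g) (cod C g)"
    using comp_assoc[OF bp(3,2) h] bp(7) comp_zer_right[OF h] hom_objs[OF g] by simp
  finally show ?thesis
    using mdiff_zer[OF g] by simp
qed

lemma m_epi: "epi C m"
  unfolding epi_def
proof (intro conjI ballI impI)
  show "m \<in> Arr C"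
    using m_in_hom in_hom_iff by blast
  fix u v
  assume "u \<in> Arr C" "v \<in> Arr C" "dom C u = cod C m" "dom C v = cod C m" "cod C u = cod C v"
    and um: "comp C u m = comp C v m"
  then have u: "u \<in> hom C (cod C g) (cod C u)" and v: "v \<in> hom C (cod C g) (cod C u)"
    using m_in_hom in_hom_iff by auto
  have "comp C u g = comp C v g"
    using comp_assoc[OF bp(3) m_in_hom u] comp_assoc[OF bp(3) m_in_hom v] um m_comp_i1 by simp
  then show "u = v"
    using epi_cancel[OF sesD(5)[OF ses]] u v by blast
qed

lemma pullback_square: "comp C g (comp C p1 k) = comp C h (comp C p2 k)"
proof -
  have "zer C (dom C k) (cod C g) = comp C m k"
    using kernelD(3)[OF kernel] m_in_hom in_hom_iff by auto
  also have "\<dots> = mdiff C (comp C g (comp C p1 k)) (comp C h (comp C p2 k))"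
    unfolding m_def
    using comp_mdiff_left[OF k_in_hom] comp_in_hom bp(1,2) g h
      comp_assoc[OF k_in_hom bp(1) g] comp_assoc[OF k_in_hom bp(2) h] by metis
  finally show ?thesis
    using eq_if_mdiff_eq_zer comp_in_hom k_in_hom bp(1,2) g h by metis
qed

lemma kernel_lift_exists: "\<exists>j\<in>hom C (dom C f) (dom C k). comp C k j = comp C i1 f"
proof -
  have "comp C m (comp C i1 f) = zer C (dom C f) (cod C g)"
    using comp_assoc[OF f bp(3) m_in_hom] m_comp_i1 gf by simp
  moreover have "dom C m = S" "cod C m = cod C g"
    using m_in_hom in_hom_iff by auto
  ultimately show ?thesis
    using kernel_factor[OF kernel, of "comp C i1 f"] comp_in_hom[OF f bp(3)] by simp
qed

context
  fixes j
  assumes j: "j \<in> hom C (dom C f) (dom C k)" and kj: "comp C k j = comp C i1 f"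
begin

lemma first_projection_lift: "comp C (comp C p1 k) j = f"
  using comp_assoc[OF j k_in_hom bp(1)] kj comp_assoc[OF f bp(3,1)] bp(5) comp_id_left[OF f]
  by simp

lemma second_projection_lift: "comp C (comp C p2 k) j = zer C (dom C f) W"
  using comp_assoc[OF j k_in_hom bp(2)] kj comp_assoc[OF f bp(3,2)] bp(7)
    comp_zer_left[OF f] hom_objs[OF h] by simp

lemma lift_cancel: "a \<in> hom C x (dom C f) \<Longrightarrow> b \<in> hom C x (dom C f) \<Longrightarrow>
  comp C j a = comp C j b \<Longrightarrow> a = b"
  using mono_cancel[OF sesD(4)[OF ses]] comp_assoc[OF _ j comp_in_hom[OF k_in_hom bp(1)]]
    first_projection_lift by metis

lemma kernel_of_second_projection: "is_kernel C (comp C p2 k) j"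
  unfolding is_kernel_def
proof (intro conjI ballI impI)
  have \<pi>: "comp C p2 k \<in> hom C (dom C k) W"
    using comp_in_hom k_in_hom bp(2) by blast
  then show "comp C p2 k \<in> Arr C" "j \<in> Arr C" "cod C j = dom C (comp C p2 k)"
    "comp C (comp C p2 k) j = zer C (dom C j) (cod C (comp C p2 k))"
    using j second_projection_lift in_hom_iff by auto
  fix t
  assume "t \<in> Arr C" "cod C t = dom C (comp C p2 k)"
    and "comp C (comp C p2 k) t = zer C (dom C t) (cod C (comp C p2 k))"
  then have t: "t \<in> hom C (dom C t) (dom C k)" and \<pi>t: "comp C (comp C p2 k) t = zer C (dom C t) W"
    using \<pi> in_hom_iff by auto
  have \<alpha>t: "comp C (comp C p1 k) t \<in> hom C (dom C t) (dom C g)"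
    using comp_in_hom t k_in_hom bp(1) by blast
  have "comp C g (comp C (comp C p1 k) t) = zer C (dom C t) (cod C g)"
    using comp_assoc[OF t comp_in_hom[OF k_in_hom bp(1)] g] comp_assoc[OF t \<pi> h]
      pullback_square \<pi>t comp_zer_right[OF h] hom_objs[OF t] by simp
  then obtain u where u: "u \<in> hom C (dom C t) (dom C f)" and fu: "comp C f u = comp C (comp C p1 k) t"
    using kernel_factor[OF _ \<alpha>t] ses unfolding ses_def by blast
  have kt: "comp C k t \<in> hom C (dom C t) S"
    using comp_in_hom t k_in_hom by blast
  have "comp C k t = comp C i1 (comp C p1 (comp C k t))"
    using biproduct_decompose[OF biproduct kt] comp_assoc[OF t k_in_hom bp(2)] \<pi>t
      comp_zer_right[OF bp(4)] plus_zer comp_in_hom[OF comp_in_hom[OF kt bp(1)] bp(3)] hom_objs[OF t]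
    by metis
  also have "\<dots> = comp C k (comp C j u)"
    using comp_assoc[OF t k_in_hom bp(1)] fu[symmetric] comp_assoc[OF u f bp(3)]
      comp_assoc[OF u j k_in_hom] kj by simp
  finally have "comp C j u = t"
    using mono_cancel[OF kernel_is_mono[OF kernel]] t comp_in_hom[OF u j] kt by metis
  then show "\<exists>!u. u \<in> hom C (dom C t) (dom C j) \<and> comp C j u = t"
    using u lift_cancel j in_hom_iff by metis
qed

end

lemma second_projection_epi: "epi C (comp C p2 k)"
  unfolding epi_def
proof (intro conjI ballI impI)
  have \<pi>: "comp C p2 k \<in> hom C (dom C k) W"
    using comp_in_hom k_in_hom bp(2) by blast
  then show "comp C p2 k \<in> Arr C"
    using in_hom_iff by blast
  fix u v
  assume "u \<in> Arr C" "v \<in> Arr C" "dom C u = cod C (comp C p2 k)" "dom C v = cod C (comp C p2 k)"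
    "cod C u = cod C v" and u\<pi>: "comp C u (comp C p2 k) = comp C v (comp C p2 k)"
  then have u: "u \<in> hom C W (cod C u)" and v: "v \<in> hom C W (cod C u)"
    using \<pi> in_hom_iff by auto
  define d where "d = mdiff C u v"
  have d: "d \<in> hom C W (cod C u)"
    unfolding d_def using mdiff_in_hom u v by blast
  have dp2: "comp C d p2 \<in> hom C S (cod C u)"
    using comp_in_hom bp(2) d by blast
  txt \<open>\<open>d \<circ> p\<^sub>2\<close> vanishes on \<open>k\<close>, so it factors as \<open>w \<circ> m\<close> since \<open>m\<close> is the
    cokernel of its kernel; and \<open>w = 0\<close> because \<open>w \<circ> g = d \<circ> p\<^sub>2 \<circ> i\<^sub>1 = 0\<close>.\<close>
  have "comp C (comp C d p2) k = zer C (dom C k) (cod C u)"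
    unfolding d_def using comp_assoc[OF k_in_hom bp(2) mdiff_in_hom[OF u v]]
      comp_mdiff_left[OF \<pi> u v] u\<pi> mdiff_self comp_in_hom[OF \<pi> v] by metis
  then obtain w where w: "w \<in> hom C (cod C g) (cod C u)" and wm: "comp C w m = comp C d p2"
    using cokernel_factor[OF epi_is_cokernel_of_kernel[OF m_epi kernel] _] dp2 k_in_hom m_in_hom
      in_hom_iff by (metis (no_types, lifting))
  have "comp C w g = comp C (comp C d p2) i1"
    using wm comp_assoc[OF bp(3) m_in_hom w] m_comp_i1 by simp
  also have "\<dots> = comp C (zer C (cod C g) (cod C u)) g"
    using comp_assoc[OF bp(3,2) d] bp(7) comp_zer_right[OF d] comp_zer_left[OF g]
      hom_objs[OF d] hom_objs[OF g] by simp
  finally have "w = zer C (cod C g) (cod C u)"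
    using epi_cancel[OF sesD(5)[OF ses]] w zer_in_hom hom_objs[OF w] by blast
  then have "comp C d p2 = zer C S (cod C u)"
    using wm comp_zer_left[OF m_in_hom] hom_objs[OF d] by simp
  then have "d = zer C W (cod C u)"
    using comp_assoc[OF bp(4,2) d] bp(6) comp_id_right[OF d] comp_zer_left[OF bp(4)] hom_objs[OF d]
    by metis
  then show "u = v"
    using eq_if_mdiff_eq_zer[OF u v] d_def by simp
qed

end

context abelian_category
begin

lemma ses_pullback:
  assumes s: "ses C f g" and h: "h \<in> hom C W (cod C g)"
  shows "\<exists>j \<pi> \<alpha>. ses C j \<pi> \<and> dom C j = dom C f \<and> cod C \<pi> = W \<and>
    \<alpha> \<in> hom C (dom C \<pi>) (dom C g) \<and> comp C g \<alpha> = comp C h \<pi> \<and> comp C \<alpha> j = f"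
proof -
  obtain S p1 p2 i1 i2 where bp: "biproduct C (dom C g) W S p1 p2 i1 i2"
    using abelian hom_objs[OF sesD(2)[OF s]] hom_objs[OF h] unfolding abelian_def by blast
  define m where "m = mdiff C (comp C g p1) (comp C h p2)"
  have "m \<in> Arr C"
    unfolding m_def using mdiff_in_hom comp_in_hom biproductD(1,2)[OF bp] sesD(2)[OF s] h in_hom_iff
    by blast
  then obtain k where k: "is_kernel C m k"
    using abelian unfolding abelian_def by blast
  interpret pullback_of_ses C f g h W S p1 p2 i1 i2 m k
    using s h bp m_def k by unfold_locales
  obtain j where j: "j \<in> hom C (dom C f) (dom C k)" "comp C k j = comp C i1 f"
    using kernel_lift_exists by blast
  have "ses C j (comp C p2 k)"
    unfolding ses_def using kernel_of_second_projection[OF j]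
      epi_is_cokernel_of_kernel[OF second_projection_epi] by blast
  moreover have "comp C p1 k \<in> hom C (dom C (comp C p2 k)) (dom C g)"
    "cod C (comp C p2 k) = W" "dom C j = dom C f"
    using comp_in_hom[OF k_in_hom bp(1)] comp_in_hom[OF k_in_hom bp(2)] j(1) in_hom_iff by auto
  ultimately show ?thesis
    using pullback_square first_projection_lift[OF j] by blast
qed

lemma ses_pushout:
  assumes s: "ses C f g" and h: "h \<in> hom C (dom C f) Y"
  shows "\<exists>f' g' \<beta>. ses C f' g' \<and> dom C f' = Y \<and> cod C g' = cod C g \<and>
    \<beta> \<in> hom C (dom C g) (cod C f') \<and> comp C \<beta> f = comp C f' h \<and> comp C g' \<beta> = g"
proof -
  have "cod C f = dom C g"
    using sesD(6)[OF s] .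
  then show ?thesis
    using abelian_category.ses_pullback[OF abelian_category_opposite, of g f h Y] s h by simp metis
qed

section \<open>Splitting and vanishing of \<open>Ext\<^sup>1\<close>\<close>

lemma ses_retraction_if_section:
  assumes s: "ses C f g" and sec: "s \<in> hom C (cod C g) (dom C g)" and gs: "comp C g s = idm C (cod C g)"
  shows "\<exists>r\<in>hom C (dom C g) (dom C f). comp C r f = idm C (dom C f)"
proof -
  note f = sesD(1)[OF s] and g = sesD(2)[OF s]
  define d where "d = mdiff C (idm C (dom C g)) (comp C s g)"
  have sg: "comp C s g \<in> hom C (dom C g) (dom C g)"
    using comp_in_hom[OF g sec] .
  have id: "idm C (dom C g) \<in> hom C (dom C g) (dom C g)"
    using id_in_hom hom_objs[OF g] by blast
  have d: "d \<in> hom C (dom C g) (dom C g)"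
    unfolding d_def using mdiff_in_hom[OF id sg] .
  have "comp C g d = mdiff C g (comp C (comp C g s) g)"
    unfolding d_def using comp_mdiff_right[OF id sg g] comp_id_right[OF g] comp_assoc[OF g sec g]
    by simp
  also have "\<dots> = zer C (dom C g) (cod C g)"
    using gs comp_id_left[OF g] mdiff_self[OF g] by simp
  finally obtain r where r: "r \<in> hom C (dom C g) (dom C f)" and fr: "comp C f r = d"
    using kernel_factor[OF _ d] s unfolding ses_def by blast
  have "comp C f (comp C r f) = comp C d f"
    using comp_assoc[OF f r f] fr by simp
  also have "\<dots> = mdiff C f (comp C s (comp C g f))"
    unfolding d_def using comp_mdiff_left[OF f id sg] comp_id_left[OF f] comp_assoc[OF f g sec]
    by simp
  also have "\<dots> = comp C f (idm C (dom C f))"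
    using sesD(3)[OF s] comp_zer_right[OF sec] hom_objs[OF f] mdiff_zer[OF f] comp_id_right[OF f]
    by simp
  finally have "comp C r f = idm C (dom C f)"
    using mono_cancel[OF sesD(4)[OF s]] comp_in_hom[OF f r] id_in_hom hom_objs[OF f] by blast
  then show ?thesis
    using r by blast
qed

lemma ses_section_if_retraction:
  assumes s: "ses C f g" and r: "r \<in> hom C (dom C g) (dom C f)" and rf: "comp C r f = idm C (dom C f)"
  shows "\<exists>s\<in>hom C (cod C g) (dom C g). comp C g s = idm C (cod C g)"
  using abelian_category.ses_retraction_if_section[OF abelian_category_opposite, of g f r]
    s r rf sesD(6)[OF s] by simp

text \<open>The pair \<open>(l, \<nu>)\<close> compares the presentation \<open>(\<kappa>, p)\<close> of \<open>cod b\<close> with the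
  extension \<open>(a, b)\<close>; \<open>l - a \<circ> \<nu>\<close> vanishes on \<open>dom \<kappa>\<close> and so induces a section of
  \<open>b\<close>.\<close>
lemma ses_section_if_restriction_extends:
  assumes ab: "ses C a b" and \<kappa>p: "ses C \<kappa> p" and cod: "cod C p = cod C b"
    and l: "l \<in> hom C (dom C p) (dom C b)" and bl: "comp C b l = p"
    and \<nu>: "\<nu> \<in> hom C (dom C p) (dom C a)" and l\<kappa>: "comp C l \<kappa> = comp C a (comp C \<nu> \<kappa>)"
  shows "\<exists>s\<in>hom C (cod C b) (dom C b). comp C b s = idm C (cod C b)"
proof -
  note a = sesD(1)[OF ab] and b = sesD(2)[OF ab]
    and \<kappa> = sesD(1)[OF \<kappa>p] and p = sesD(2)[OF \<kappa>p]
  have a\<nu>: "comp C a \<nu> \<in> hom C (dom C p) (dom C b)"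
    using comp_in_hom[OF \<nu> a] .
  define d where "d = mdiff C l (comp C a \<nu>)"
  have d: "d \<in> hom C (dom C p) (dom C b)"
    unfolding d_def using mdiff_in_hom[OF l a\<nu>] .
  have d\<kappa>: "comp C d \<kappa> = zer C (dom C \<kappa>) (dom C b)"
    unfolding d_def using comp_mdiff_left[OF \<kappa> l a\<nu>] comp_assoc[OF \<kappa> \<nu> a] l\<kappa>
      mdiff_self comp_in_hom[OF \<kappa> l] by simp
  have "is_cokernel C \<kappa> p"
    using \<kappa>p unfolding ses_def by blast
  from cokernel_factor[OF this d[folded sesD(6)[OF \<kappa>p]] d\<kappa>] cod
  obtain \<sigma> where \<sigma>: "\<sigma> \<in> hom C (cod C b) (dom C b)" and \<sigma>p: "comp C \<sigma> p = d"
    by auto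
  have "comp C (comp C b \<sigma>) p = mdiff C p (comp C (comp C b a) \<nu>)"
    using d_def comp_assoc[OF p[unfolded cod] \<sigma> b] \<sigma>p comp_mdiff_right[OF l a\<nu> b]
      bl comp_assoc[OF \<nu> a b] by simp
  also have "\<dots> = comp C (idm C (cod C b)) p"
    using sesD(3)[OF ab] comp_zer_left[OF \<nu>] hom_objs[OF b] mdiff_zer p cod comp_id_left[OF p]
    by simp
  finally have "comp C b \<sigma> = idm C (cod C b)"
    using epi_cancel[OF sesD(5)[OF \<kappa>p]] comp_in_hom[OF \<sigma> b] id_in_hom hom_objs[OF b] cod
    by simp
  then show ?thesis
    using \<sigma> by blast
qed

lemma ext1_zero_lift:
  assumes ext: "ext1_zero C W (dom C f)" and s: "ses C f g" and h: "h \<in> hom C W (cod C g)"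
  shows "\<exists>h'\<in>hom C W (dom C g). comp C g h' = h"
proof -
  obtain j \<pi> \<alpha> where pb: "ses C j \<pi>" "dom C j = dom C f" "cod C \<pi> = W"
    "\<alpha> \<in> hom C (dom C \<pi>) (dom C g)" "comp C g \<alpha> = comp C h \<pi>"
    using ses_pullback[OF s h] by blast
  obtain t where t: "t \<in> hom C W (dom C \<pi>)" and \<pi>t: "comp C \<pi> t = idm C W"
    using ext pb unfolding ext1_zero_def by blast
  have \<pi>: "\<pi> \<in> hom C (dom C \<pi>) W"
    using sesD(2)[OF pb(1)] pb(3) by simp
  have "comp C g (comp C \<alpha> t) = h"
    using comp_assoc[OF t pb(4) sesD(2)[OF s]] comp_assoc[OF t \<pi> h] pb(5) \<pi>t comp_id_right[OF h]
    by simp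
  then show ?thesis
    using comp_in_hom[OF t pb(4)] by blast
qed

lemma ext1_zero_extend:
  assumes ext: "ext1_zero C (cod C g) Y" and s: "ses C f g" and h: "h \<in> hom C (dom C f) Y"
  shows "\<exists>h'\<in>hom C (dom C g) Y. comp C h' f = h"
proof -
  obtain f' g' \<beta> where po: "ses C f' g'" "dom C f' = Y" "cod C g' = cod C g"
    "\<beta> \<in> hom C (dom C g) (cod C f')" "comp C \<beta> f = comp C f' h"
    using ses_pushout[OF s h] by blast
  obtain t where "t \<in> hom C (cod C g') (dom C g')" "comp C g' t = idm C (cod C g')"
    using ext po unfolding ext1_zero_def by metis
  then obtain q where q: "q \<in> hom C (dom C g') Y" and qf': "comp C q f' = idm C Y"
    using ses_retraction_if_section[OF po(1)] po(2) by metis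
  have f': "f' \<in> hom C Y (cod C f')" and q': "q \<in> hom C (cod C f') Y"
    using sesD(1,6)[OF po(1)] po(2) q by simp_all
  have "comp C (comp C q \<beta>) f = h"
    using comp_assoc[OF sesD(1)[OF s] po(4) q'] po(5) comp_assoc[OF h f' q'] qf' comp_id_left[OF h]
    by simp
  then show ?thesis
    using comp_in_hom[OF po(4) q'] by blast
qed

lemma hom_left_exact:
  assumes s: "ses C f g" and P: "P \<in> Obj C"
  shows "inj_on (comp C f) (hom C P (dom C f))"
    "comp C f ` hom C P (dom C f) = {u \<in> hom C P (dom C g). comp C g u = zer C P (cod C g)}"
proof -
  note f = sesD(1)[OF s] and g = sesD(2)[OF s]
  show "inj_on (comp C f) (hom C P (dom C f))"
    using mono_cancel[OF sesD(4)[OF s]] by (auto intro: inj_onI)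
  have "comp C g (comp C f u) = zer C P (cod C g)" if u: "u \<in> hom C P (dom C f)" for u
    using comp_assoc[OF u f g] sesD(3)[OF s] comp_zer_left[OF u] hom_objs[OF g] by simp
  moreover have "u \<in> comp C f ` hom C P (dom C f)"
    if "u \<in> hom C P (dom C g)" "comp C g u = zer C P (cod C g)" for u
    using kernel_factor[of g f u P] s that unfolding ses_def by force
  ultimately show "comp C f ` hom C P (dom C f) = {u \<in> hom C P (dom C g). comp C g u = zer C P (cod C g)}"
    using comp_in_hom[OF _ f] by blast
qed

lemma hom_left_exact_contravariant:
  assumes s: "ses C f g" and I: "I \<in> Obj C"
  shows "inj_on (\<lambda>u. comp C u g) (hom C (cod C g) I)"
    "(\<lambda>u. comp C u g) ` hom C (cod C g) I = {v \<in> hom C (dom C g) I. comp C v f = zer C (dom C f) I}"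
proof -
  have "comp (opposite C) g = (\<lambda>u. comp C u g)"
    by auto
  then show "inj_on (\<lambda>u. comp C u g) (hom C (cod C g) I)"
    "(\<lambda>u. comp C u g) ` hom C (cod C g) I = {v \<in> hom C (dom C g) I. comp C v f = zer C (dom C f) I}"
    using abelian_category.hom_left_exact[OF abelian_category_opposite, of g f I] s I sesD(6)[OF s]
    by simp_all
qed

lemma projective_retract:
  assumes P: "projective C P" and s: "s \<in> hom C W P" and r: "r \<in> hom C P W"
    and rs: "comp C r s = idm C W"
  shows "projective C W"
  unfolding projective_def
proof (intro conjI allI impI)
  show "W \<in> Obj C"
    using hom_objs[OF s] by blast
  fix e h
  assume e: "epi C e" and h: "h \<in> hom C W (cod C e)"
  obtain l where l: "l \<in> hom C P (dom C e)" and el: "comp C e l = comp C h r"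
    using P e comp_in_hom[OF r h] unfolding projective_def by blast
  have "comp C e (comp C l s) = h"
    using comp_assoc[OF s l epi_in_hom[OF e]] el comp_assoc[OF s r h] rs comp_id_right[OF h] by simp
  then show "\<exists>h'\<in>hom C W (dom C e). comp C e h' = h"
    using comp_in_hom[OF s l] by blast
qed

lemma injective_retract:
  "injective C I \<Longrightarrow> s \<in> hom C W I \<Longrightarrow> r \<in> hom C I W \<Longrightarrow> comp C r s = idm C W \<Longrightarrow> injective C W"
  using abelian_category.projective_retract[OF abelian_category_opposite, of I r W s]
  by (simp add: injective_iff_projective_opposite)

lemma injective_ext1_zero:
  assumes I: "injective C I"
  shows "ext1_zero C A I"
  unfolding ext1_zero_def
proof (intro allI impI)
  fix f g
  assume s: "ses C f g" and "dom C f = I" and "cod C g = A"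
  then obtain r where "r \<in> hom C (dom C g) (dom C f)" "comp C r f = idm C (dom C f)"
    using I sesD(4,6)[OF s] id_in_hom unfolding injective_def by metis
  then show "\<exists>s\<in>hom C A (dom C g). comp C g s = idm C A"
    using ses_section_if_retraction[OF s] \<open>cod C g = A\<close> by blast
qed

text \<open>Dimension shifting along a projective presentation \<open>0 \<rightarrow> \<Omega> \<rightarrow> P \<rightarrow> X' \<rightarrow> 0\<close>,
  whose kernel \<open>\<Omega>\<close> lies in \<open>X\<close> because \<open>X\<close> is resolving.\<close>
lemma cotorsion_pair_right_closed_under_cokernels:
  assumes pair: "cotorsion_pair C X Z" and res: "resolving C X" and ep: "enough_projectives C"
    and mc: "ses C m c" and m: "dom C m \<in> Z" and c: "dom C c \<in> Z"
  shows "cod C c \<in> Z"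
proof -
  have "ext1_zero C X' (cod C c)" if X': "X' \<in> X" for X'
    unfolding ext1_zero_def
  proof (intro allI impI)
    fix a b
    assume ab: "ses C a b" and a: "dom C a = cod C c" and b: "cod C b = X'"
    obtain P p where P: "projective C P" and p: "p \<in> hom C P X'" and "epi C p"
      using ep X' pair unfolding enough_projectives_def cotorsion_pair_def by blast
    then obtain \<kappa> where \<kappa>p: "ses C \<kappa> p"
      using ses_of_epi by blast
    have dp: "dom C p = P" "cod C p = X'"
      using p in_hom_iff by auto
    have \<kappa>: "\<kappa> \<in> hom C (dom C \<kappa>) P"
      using sesD(1,6)[OF \<kappa>p] dp by simp
    have \<Omega>: "dom C \<kappa> \<in> X"
      using res P X' \<kappa>p dp unfolding resolving_def by metis
    obtain l where l: "l \<in> hom C P (dom C b)" and bl: "comp C b l = p"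
      using P sesD(5)[OF ab] p b unfolding projective_def by blast
    have "comp C b (comp C l \<kappa>) = zer C (dom C \<kappa>) (cod C b)"
      using comp_assoc[OF \<kappa> l sesD(2)[OF ab]] bl sesD(3)[OF \<kappa>p] dp b by simp
    then obtain \<theta> where \<theta>: "\<theta> \<in> hom C (dom C \<kappa>) (cod C c)" and a\<theta>: "comp C a \<theta> = comp C l \<kappa>"
      using kernel_factor[of b a] ab comp_in_hom[OF \<kappa> l] a unfolding ses_def by force
    obtain \<mu> where \<mu>: "\<mu> \<in> hom C (dom C \<kappa>) (dom C c)" and c\<mu>: "comp C c \<mu> = \<theta>"
      using ext1_zero_lift[OF _ mc \<theta>] pair \<Omega> m unfolding cotorsion_pair_def by blast
    obtain \<nu> where \<nu>: "\<nu> \<in> hom C P (dom C c)" and \<nu>\<kappa>: "comp C \<nu> \<kappa> = \<mu>"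
      using ext1_zero_extend[OF _ \<kappa>p] \<mu> pair X' c dp unfolding cotorsion_pair_def by blast
    have "comp C l \<kappa> = comp C a (comp C (comp C c \<nu>) \<kappa>)"
      using a\<theta> c\<mu> \<nu>\<kappa> comp_assoc[OF \<kappa> \<nu> sesD(2)[OF mc]] by simp
    then show "\<exists>s\<in>hom C X' (dom C b). comp C b s = idm C X'"
      using ses_section_if_restriction_extends[OF ab \<kappa>p _ _ bl] l dp b a
        comp_in_hom[OF \<nu> sesD(2)[OF mc]] by simp
  qed
  then show ?thesis
    using pair hom_objs[OF sesD(2)[OF mc]] unfolding cotorsion_pair_def by blast
qed

end

section \<open>The exact structure \<open>F\<^sub>X\<close> of a cotorsion triple\<close>

locale cotorsion_triple_setting = abelian_category +
  fixes X Z Y :: "'o set"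
  assumes enough_projectives: "enough_projectives C"
    and enough_injectives: "enough_injectives C"
    and triple: "complete_hereditary_cotorsion_triple C X Z Y"
begin

lemma XZ_pair: "cotorsion_pair C X Z" and ZY_pair: "cotorsion_pair C Z Y"
  and X_resolving: "resolving C X" and Z_resolving: "resolving C Z"
  using triple unfolding complete_hereditary_cotorsion_triple_def hereditary_cotorsion_pair_def
  by blast+

lemma X_Z_precover: "A \<in> Obj C \<Longrightarrow> \<exists>f g. ses C f g \<and> dom C f \<in> Z \<and> dom C g \<in> X \<and> cod C g = A"
  and Z_Y_envelope: "A \<in> Obj C \<Longrightarrow> \<exists>f g. ses C f g \<and> dom C f = A \<and> dom C g \<in> Y \<and> cod C g \<in> Z"
  using triple unfolding complete_hereditary_cotorsion_triple_def complete_cotorsion_pair_def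
  by blast+

lemma X_Z_ext1_zero: "A \<in> X \<Longrightarrow> B \<in> Z \<Longrightarrow> ext1_zero C A B"
  using XZ_pair unfolding cotorsion_pair_def by blast

lemma Z_Y_ext1_zero: "A \<in> Z \<Longrightarrow> B \<in> Y \<Longrightarrow> ext1_zero C A B"
  using ZY_pair unfolding cotorsion_pair_def by blast

lemma X_objects: "A \<in> X \<Longrightarrow> A \<in> Obj C"
  and Z_objects: "A \<in> Z \<Longrightarrow> A \<in> Obj C"
  and Y_objects: "A \<in> Y \<Longrightarrow> A \<in> Obj C"
  using XZ_pair ZY_pair unfolding cotorsion_pair_def by blast+

lemma projective_in_Z: "projective C P \<Longrightarrow> P \<in> Z"
  using Z_resolving unfolding resolving_def by blast

lemma injective_in_Z: "injective C I \<Longrightarrow> I \<in> Z"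
  using XZ_pair injective_ext1_zero unfolding cotorsion_pair_def injective_def by blast

lemma X_Int_Z_projective:
  assumes W: "W \<in> X" "W \<in> Z"
  shows "projective C W"
proof -
  obtain P p where P: "projective C P" and p: "p \<in> hom C P W" and "epi C p"
    using enough_projectives X_objects[OF W(1)] unfolding enough_projectives_def by blast
  then obtain \<kappa> where \<kappa>p: "ses C \<kappa> p"
    using ses_of_epi by blast
  have "dom C p = P" "cod C p = W"
    using p in_hom_iff by auto
  then have "dom C \<kappa> \<in> Z"
    using Z_resolving \<kappa>p projective_in_Z[OF P] W(2) unfolding resolving_def by metis
  then obtain s where "s \<in> hom C W P" "comp C p s = idm C W"
    using X_Z_ext1_zero[OF W(1)] \<kappa>p \<open>dom C p = P\<close> \<open>cod C p = W\<close> unfolding ext1_zero_def by metis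
  then show ?thesis
    using projective_retract[OF P] p by blast
qed

lemma Y_Int_Z_injective:
  assumes W: "W \<in> Y" "W \<in> Z"
  shows "injective C W"
proof -
  obtain I i where I: "injective C I" and i: "i \<in> hom C W I" and "mono C i"
    using enough_injectives Y_objects[OF W(1)] unfolding enough_injectives_def by blast
  then obtain c where ic: "ses C i c"
    using ses_of_mono by blast
  have "dom C i = W" "cod C i = I"
    using i in_hom_iff by auto
  then have "cod C c \<in> Z"
    using cotorsion_pair_right_closed_under_cokernels[OF XZ_pair X_resolving enough_projectives ic]
      W(2) injective_in_Z[OF I] sesD(6)[OF ic] by simp
  then obtain t where "t \<in> hom C (cod C c) (dom C c)" "comp C c t = idm C (cod C c)"
    using Z_Y_ext1_zero W(1) ic \<open>dom C i = W\<close> unfolding ext1_zero_def by blast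
  then obtain r where "r \<in> hom C I W" "comp C r i = idm C W"
    using ses_retraction_if_section[OF ic] sesD(6)[OF ic] \<open>dom C i = W\<close> \<open>cod C i = I\<close> by metis
  then show ?thesis
    using injective_retract[OF I i] by blast
qed

text \<open>The morphism is first extended along the (Z,Y)-envelope of its domain; that envelope
  lies in Y and, being an extension of objects of Z, also in Z, so it is injective.\<close>
lemma Z_to_Y_extends_along_mono:
  assumes k: "mono C k" and dk: "dom C k \<in> Z" and \<phi>: "\<phi> \<in> hom C (dom C k) V" and V: "V \<in> Y"
  shows "\<exists>\<psi>\<in>hom C (cod C k) V. comp C \<psi> k = \<phi>"
proof -
  obtain i c where ic: "ses C i c" and di: "dom C i = dom C k" and dc: "dom C c \<in> Y"
    and cc: "cod C c \<in> Z"
    using Z_Y_envelope Z_objects[OF dk] by blast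
  obtain \<phi>' where \<phi>': "\<phi>' \<in> hom C (dom C c) V" and \<phi>'i: "comp C \<phi>' i = \<phi>"
    using ext1_zero_extend[OF Z_Y_ext1_zero[OF cc V] ic] \<phi> di by auto
  have "dom C c \<in> Z"
    using Z_resolving ic dk di cc unfolding resolving_def by metis
  then obtain l where l: "l \<in> hom C (cod C k) (dom C c)" and lk: "comp C l k = i"
    using Y_Int_Z_injective[OF dc] k sesD(1,6)[OF ic] di unfolding injective_def by metis
  have "comp C (comp C \<phi>' l) k = \<phi>"
    using comp_assoc[OF mono_in_hom[OF k] l \<phi>'] lk \<phi>'i by simp
  then show ?thesis
    using comp_in_hom[OF l \<phi>'] by blast
qed

lemma F_conflationD:
  assumes "F_conflation C X f g"
  shows "ses C f g"
    and "W \<in> X \<Longrightarrow> h \<in> hom C W (cod C g) \<Longrightarrow> \<exists>h'\<in>hom C W (dom C g). comp C g h' = h"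
  using assms unfolding F_conflation_def by blast+

lemma F_conflation_if_factors:
  assumes F: "F_conflation C X f g" and s': "ses C f' g'" and cod: "cod C g' = cod C g"
    and \<beta>: "\<beta> \<in> hom C (dom C g) (dom C g')" and g'\<beta>: "comp C g' \<beta> = g"
  shows "F_conflation C X f' g'"
  unfolding F_conflation_def
proof (intro conjI ballI s')
  fix W h
  assume W: "W \<in> X" and h: "h \<in> hom C W (cod C g')"
  then obtain l where l: "l \<in> hom C W (dom C g)" and gl: "comp C g l = h"
    using F_conflationD(2)[OF F] cod by auto
  have "comp C g' (comp C \<beta> l) = h"
    using comp_assoc[OF l \<beta> sesD(2)[OF s']] g'\<beta> gl by simp
  then show "\<exists>h'\<in>hom C W (dom C g'). comp C g' h' = h"
    using comp_in_hom[OF l \<beta>] by blast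
qed

text \<open>Compare with an (X,Z)-precover of the end term: the lift of the precover to the middle
  term restricts, on its Z-kernel, to a map into the Y-object, which extends.\<close>
lemma F_conflation_with_Y_kernel_splits:
  assumes F: "F_conflation C X f g" and V: "dom C f \<in> Y"
  shows "\<exists>r\<in>hom C (dom C g) (dom C f). comp C r f = idm C (dom C f)"
proof -
  note s = F_conflationD(1)[OF F]
  note f = sesD(1)[OF s] and g = sesD(2)[OF s]
  obtain k p where kp: "ses C k p" and dk: "dom C k \<in> Z" and dp: "dom C p \<in> X"
    and cp: "cod C p = cod C g"
    using X_Z_precover hom_objs[OF g] by blast
  note k = sesD(1)[OF kp] and p = sesD(2)[OF kp]
  obtain q where q: "q \<in> hom C (dom C p) (dom C g)" and gq: "comp C g q = p"
    using F_conflationD(2)[OF F dp] p cp by auto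
  have "comp C g (comp C q k) = zer C (dom C k) (cod C g)"
    using comp_assoc[OF k q g] gq sesD(3)[OF kp] cp by simp
  then obtain \<phi> where \<phi>: "\<phi> \<in> hom C (dom C k) (dom C f)" and f\<phi>: "comp C f \<phi> = comp C q k"
    using kernel_factor[of g f] s comp_in_hom[OF k q] unfolding ses_def by blast
  obtain \<psi> where \<psi>: "\<psi> \<in> hom C (dom C p) (dom C f)" and \<psi>k: "comp C \<psi> k = \<phi>"
    using Z_to_Y_extends_along_mono[OF sesD(4)[OF kp] dk \<phi> V] sesD(6)[OF kp] by auto
  have "\<exists>t\<in>hom C (cod C g) (dom C g). comp C g t = idm C (cod C g)"
    using ses_section_if_restriction_extends[OF s kp cp q gq \<psi>] f\<phi> \<psi>k by simp
  then show ?thesis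
    using ses_retraction_if_section[OF s] by blast
qed

lemma X_F_projective:
  assumes W: "W \<in> X"
  shows "F_projective C X W"
  unfolding F_projective_def
proof (intro conjI allI impI)
  show "W \<in> Obj C"
    using X_objects[OF W] .
  fix f g
  assume F: "F_conflation C X f g"
  show "inj_on (comp C f) (hom C W (dom C f))"
    "comp C f ` hom C W (dom C f) = {u \<in> hom C W (dom C g). comp C g u = zer C W (cod C g)}"
    using hom_left_exact[OF F_conflationD(1)[OF F] X_objects[OF W]] by simp_all
  show "comp C g ` hom C W (dom C g) = hom C W (cod C g)"
    using F_conflationD(2)[OF F W] comp_in_hom sesD(2)[OF F_conflationD(1)[OF F]] by blast
qed

lemma Y_F_injective:
  assumes V: "V \<in> Y"
  shows "F_injective C X V"
  unfolding F_injective_def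
proof (intro conjI allI impI)
  show "V \<in> Obj C"
    using Y_objects[OF V] .
  fix f g
  assume F: "F_conflation C X f g"
  note s = F_conflationD(1)[OF F]
  show "inj_on (\<lambda>u. comp C u g) (hom C (cod C g) V)"
    "(\<lambda>u. comp C u g) ` hom C (cod C g) V =
       {v \<in> hom C (dom C g) V. comp C v f = zer C (dom C f) V}"
    using hom_left_exact_contravariant[OF s Y_objects[OF V]] by simp_all
  have "h \<in> (\<lambda>v. comp C v f) ` hom C (dom C g) V" if h: "h \<in> hom C (dom C f) V" for h
  proof -
    obtain f' g' \<beta> where po: "ses C f' g'" "dom C f' = V" "cod C g' = cod C g"
      "\<beta> \<in> hom C (dom C g) (cod C f')" "comp C \<beta> f = comp C f' h" "comp C g' \<beta> = g"
      using ses_pushout[OF s h] by blast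
    have "F_conflation C X f' g'"
      using F_conflation_if_factors[OF F po(1,3) _ po(6)] po(4) sesD(6)[OF po(1)] by simp
    then obtain q where q: "q \<in> hom C (cod C f') V" and qf': "comp C q f' = idm C V"
      using F_conflation_with_Y_kernel_splits po(2) V sesD(6)[OF po(1)] by auto
    have "comp C (comp C q \<beta>) f = h"
      using comp_assoc[OF sesD(1)[OF s] po(4) q] po(5) comp_assoc[OF h _ q] sesD(1,6)[OF po(1)] po(2)
        qf' comp_id_left[OF h] by simp
    then show ?thesis
      using comp_in_hom[OF po(4) q] by force
  qed
  then show "(\<lambda>v. comp C v f) ` hom C (dom C g) V = hom C (dom C f) V"
    using comp_in_hom[OF sesD(1)[OF s]] by blast
qed

lemma X_F_precover:
  assumes A: "A \<in> Obj C"
  shows "\<exists>f g. F_conflation C X f g \<and> dom C g \<in> X \<and> cod C g = A"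
proof -
  obtain f g where s: "ses C f g" and df: "dom C f \<in> Z" and "dom C g \<in> X" "cod C g = A"
    using X_Z_precover[OF A] by blast
  moreover have "F_conflation C X f g"
    unfolding F_conflation_def using s ext1_zero_lift[OF X_Z_ext1_zero[OF _ df] s] by blast
  ultimately show ?thesis
    by blast
qed

text \<open>The end term of the (Z,Y)-envelope lies in Z, so its (X,Z)-precover has middle term in
  X and in Z, hence projective; maps from X lift through that precover and then through the
  envelope.\<close>
lemma Y_F_envelope:
  assumes A: "A \<in> Obj C"
  shows "\<exists>f g. F_conflation C X f g \<and> dom C f = A \<and> dom C g \<in> Y"
proof -
  obtain f g where s: "ses C f g" and "dom C f = A" "dom C g \<in> Y" and cg: "cod C g \<in> Z"
    using Z_Y_envelope[OF A] by blast
  moreover have "F_conflation C X f g"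
    unfolding F_conflation_def
  proof (intro conjI ballI s)
    fix W h
    assume W: "W \<in> X" and h: "h \<in> hom C W (cod C g)"
    obtain k p where kp: "ses C k p" and dk: "dom C k \<in> Z" and dp: "dom C p \<in> X"
      and cp: "cod C p = cod C g"
      using X_Z_precover[OF Z_objects[OF cg]] by blast
    have "dom C p \<in> Z"
      using Z_resolving kp dk cp cg unfolding resolving_def by metis
    then have P: "projective C (dom C p)"
      using X_Int_Z_projective dp by blast
    obtain h1 where h1: "h1 \<in> hom C W (dom C p)" and ph1: "comp C p h1 = h"
      using ext1_zero_lift[OF X_Z_ext1_zero[OF W dk] kp] h cp by auto
    obtain l where l: "l \<in> hom C (dom C p) (dom C g)" and gl: "comp C g l = p"
      using P sesD(5)[OF s] sesD(2)[OF kp] cp unfolding projective_def by force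
    have "comp C g (comp C l h1) = h"
      using comp_assoc[OF h1 l sesD(2)[OF s]] gl ph1 by simp
    then show "\<exists>h'\<in>hom C W (dom C g). comp C g h' = h"
      using comp_in_hom[OF h1 l] by blast
  qed
  ultimately show ?thesis
    by blast
qed

lemma F_projective_in_X:
  assumes P: "F_projective C X P"
  shows "P \<in> X"
proof -
  have oP: "P \<in> Obj C"
    using P unfolding F_projective_def by blast
  obtain f g where F: "F_conflation C X f g" and dg: "dom C g \<in> X" and cg: "cod C g = P"
    using X_F_precover[OF oP] by blast
  have "comp C g ` hom C P (dom C g) = hom C P P"
    using P F cg unfolding F_projective_def by blast
  then obtain s where s: "s \<in> hom C P (dom C g)" and gs: "comp C g s = idm C P"
    using id_in_hom[OF oP] by (metis imageE)
  have g: "g \<in> hom C (dom C g) P"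
    using sesD(2)[OF F_conflationD(1)[OF F]] cg by simp
  have "ext1_zero C P B" if B: "B \<in> Z" for B
    unfolding ext1_zero_def
  proof (intro allI impI)
    fix f' g'
    assume s': "ses C f' g'" and "dom C f' = B" and cg': "cod C g' = P"
    then have "ext1_zero C (dom C g) (dom C f')"
      using X_Z_ext1_zero[OF dg B] by simp
    then obtain t where t: "t \<in> hom C (dom C g) (dom C g')" and g't: "comp C g' t = g"
      using ext1_zero_lift[OF _ s' g[folded cg']] by blast
    have "comp C g' (comp C t s) = idm C P"
      using comp_assoc[OF s t sesD(2)[OF s']] g't gs cg' by simp
    then show "\<exists>s\<in>hom C P (dom C g'). comp C g' s = idm C P"
      using comp_in_hom[OF s t] by blast
  qed
  then show ?thesis
    using XZ_pair oP unfolding cotorsion_pair_def by blast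
qed

lemma F_injective_in_Y:
  assumes I: "F_injective C X I"
  shows "I \<in> Y"
proof -
  have oI: "I \<in> Obj C"
    using I unfolding F_injective_def by blast
  obtain f g where F: "F_conflation C X f g" and df: "dom C f = I" and dg: "dom C g \<in> Y"
    using Y_F_envelope[OF oI] by blast
  have "(\<lambda>v. comp C v f) ` hom C (dom C g) I = hom C I I"
    using I F df unfolding F_injective_def by blast
  then obtain r where r: "r \<in> hom C (dom C g) I" and rf: "comp C r f = idm C I"
    using id_in_hom[OF oI] by (metis (no_types, lifting) imageE)
  have f: "f \<in> hom C I (dom C g)"
    using sesD(1)[OF F_conflationD(1)[OF F]] df by simp
  have "ext1_zero C A I" if A: "A \<in> Z" for A
    unfolding ext1_zero_def
  proof (intro allI impI)
    fix f' g'
    assume s': "ses C f' g'" and df': "dom C f' = I" and cg': "cod C g' = A"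
    obtain e where e: "e \<in> hom C (dom C g') (dom C g)" and ef': "comp C e f' = f"
      using ext1_zero_extend[OF _ s'] Z_Y_ext1_zero[OF A dg] cg' df' f by auto
    have "comp C (comp C r e) f' = idm C I"
      using comp_assoc[OF sesD(1)[OF s'] e r] ef' rf df' by simp
    then show "\<exists>s\<in>hom C A (dom C g'). comp C g' s = idm C A"
      using ses_section_if_retraction[OF s'] comp_in_hom[OF e r] df' cg' by auto
  qed
  then show ?thesis
    using ZY_pair oI unfolding cotorsion_pair_def by blast
qed

end

theorem lemma5p2:
  fixes C :: "('o, 'm) acat" and X Z Y :: "'o set"
  assumes "abelian C"
    and "krull_schmidt C"
    and "enough_projectives C"
    and "enough_injectives C"
    and "complete_hereditary_cotorsion_triple C X Z Y"
  shows "F_enough_projectives C X \<and> F_enough_injectives C X \<and>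
         {P \<in> Obj C. F_projective C X P} = X \<and>
         {I \<in> Obj C. F_injective C X I} = Y"
proof -
  interpret cotorsion_triple_setting C X Z Y
    using assms by unfold_locales
  have "F_enough_projectives C X"
    unfolding F_enough_projectives_def using X_F_precover X_F_projective by blast
  moreover have "F_enough_injectives C X"
    unfolding F_enough_injectives_def
    using Y_F_envelope Y_F_injective sesD(6)[OF F_conflationD(1)] by metis
  moreover have "{P \<in> Obj C. F_projective C X P} = X"
    using F_projective_in_X X_F_projective X_objects by blast
  moreover have "{I \<in> Obj C. F_injective C X I} = Y"
    using F_injective_in_Y Y_F_injective Y_objects by blast
  ultimately show ?thesis
    by blast
qed

end
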